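(* Let $n,m\ge 3$ and let $G=P_n\square P_m$ be the grid graph. Let $(p,q)$ be an interior vertex, taken as origin. Let $Q$ and $Q'$ be two opposite quadrants with respect to $(p,q)$. Let $A$ be a finite set of vertices all lying in $Q$, let $B$ be a finite set of vertices all lying in $Q'$, and let $C$ be a finite set of vertices all lying on the boundary of one of these two quadrants (i.e. all on the boundary of $Q$, or all on the boundary of $Q'$). Then there exist two neighbours of $(p,q)$, of the form $(p^*,q)$ and $(p,q^* )$, that are not resolved by any vertex of $\{(p,q)\}\cup A\cup B\cup C$.
   Context: The grid graph $P_n\square P_m$ has vertex set $\{(i,j):0\le i\le n-1,\ 0\le j\le m-1\}$, with $(i,j)$ adjacent to $(k,l)$ iff $|i-k|+|j-l|=1$; distance $d((i,j),(k,l))=|i-k|+|j-l|$. A vertex $w$ resolves $x,y$ if $d(w,x)\ne d(w,y)$. Interior vertices are those of degree 4. With respect to an origin $(p,q)$, the four quadrants are $\{(x,y):x>p,y>q\}$, $\{(x,y):x<p,y>q\}$, $\{(x,y):x<p,y<q\}$, $\{(x,y):x>p,y<q\}$ (the axes and origin belong to no quadrant). The boundary of a quadrant consists of the points on the two half-axes bounding it, excluding the origin; e.g. the boundary of $\{x>p,y>q\}$ is $\{(x,q):x>p\}\cup\{(p,y):y>q\}$. Two quadrants are opposite if their boundaries share no point (i.e. $\{x>p,y>q\}$ with $\{x<p,y<q\}$, and $\{x<p,y>q\}$ with $\{x>p,y<q\}$). *)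

theory Defs
  imports Main
begin

type_synonym vertex = "int \<times> int"

definition grid_V :: "nat \<Rightarrow> nat \<Rightarrow> vertex set" where
  "grid_V n m = {(i, j). 0 \<le> i \<and> i \<le> int n - 1 \<and> 0 \<le> j \<and> j \<le> int m - 1}"

definition gdist :: "vertex \<Rightarrow> vertex \<Rightarrow> int" where
  "gdist u v = \<bar>fst u - fst v\<bar> + \<bar>snd u - snd v\<bar>"

definition grid_adj :: "nat \<Rightarrow> nat \<Rightarrow> vertex \<Rightarrow> vertex \<Rightarrow> bool" where
  "grid_adj n m u v \<longleftrightarrow> u \<in> grid_V n m \<and> v \<in> grid_V n m \<and> gdist u v = 1"

definition grid_degree :: "nat \<Rightarrow> nat \<Rightarrow> vertex \<Rightarrow> nat" where
  "grid_degree n m v = card {w. grid_adj n m v w}"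

definition interior :: "nat \<Rightarrow> nat \<Rightarrow> vertex \<Rightarrow> bool" where
  "interior n m v \<longleftrightarrow> v \<in> grid_V n m \<and> grid_degree n m v = 4"

definition resolves :: "vertex \<Rightarrow> vertex \<Rightarrow> vertex \<Rightarrow> bool" where
  "resolves w x y \<longleftrightarrow> gdist w x \<noteq> gdist w y"

text \<open>Quadrant w.r.t. origin (p,q) with sign pattern (sx,sy), sx, sy in {1,-1}:
  (1,1) = {x>p,y>q}, (-1,1) = {x<p,y>q}, (-1,-1) = {x<p,y<q}, (1,-1) = {x>p,y<q}.
  The opposite quadrant of (sx,sy) is (-sx,-sy).\<close>
definition quadrant :: "vertex \<Rightarrow> int \<Rightarrow> int \<Rightarrow> vertex set" where
  "quadrant o' sx sy = {(x, y). sx * (x - fst o') > 0 \<and> sy * (y - snd o') > 0}"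

definition qboundary :: "vertex \<Rightarrow> int \<Rightarrow> int \<Rightarrow> vertex set" where
  "qboundary o' sx sy =
     {(x, y). y = snd o' \<and> sx * (x - fst o') > 0} \<union> {(x, y). x = fst o' \<and> sy * (y - snd o') > 0}"

end

theory Submission
  imports Defs
begin

text \<open>Let the quadrant Q have sign pattern (sx,sy) with respect to the origin (p,q), and take the
  neighbours (p - sx, q) and (p, q - sy), which lie on the far side of the origin from Q. Seen from
  a vertex of Q or of its boundary, both are one step further away than the origin; seen from the
  opposite quadrant, both are one step closer. So the origin, both quadrants and the boundary of Q
  never resolve them. If C lies on the boundary of the opposite quadrant, exchange the two
  quadrants.\<close>

lemma grid_adj_neighbours:
  "{w. grid_adj n m (p, q) w} \<subseteq> {(p + 1, q), (p - 1, q), (p, q + 1), (p, q - 1)}"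
proof
  fix w assume "w \<in> {w. grid_adj n m (p, q) w}"
  then have "\<bar>p - fst w\<bar> + \<bar>q - snd w\<bar> = 1"
    by (simp add: grid_adj_def gdist_def)
  then show "w \<in> {(p + 1, q), (p - 1, q), (p, q + 1), (p, q - 1)}"
    by (cases w) (auto simp: abs_if split: if_splits)
qed

text \<open>Degree 4 forces all four lattice neighbours to be grid vertices.\<close>
lemma interior_grid_adj:
  assumes "interior n m (p, q)" and "v \<in> {(p + 1, q), (p - 1, q), (p, q + 1), (p, q - 1)}"
  shows "grid_adj n m (p, q) v"
proof (rule ccontr)
  let ?N = "{(p + 1, q), (p - 1, q), (p, q + 1), (p, q - 1)}"
  assume "\<not> grid_adj n m (p, q) v"
  then have "{w. grid_adj n m (p, q) w} \<subseteq> ?N - {v}"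
    using grid_adj_neighbours[of n m p q] by blast
  then have "card {w. grid_adj n m (p, q) w} \<le> card (?N - {v})"
    by (intro card_mono) auto
  also have "\<dots> \<le> 3"
    using card_length[of "[(p + 1, q), (p - 1, q), (p, q + 1), (p, q - 1)]"] assms(2)
    by (simp add: card_Diff_singleton)
  finally show False
    using assms(1) by (simp add: interior_def grid_degree_def)
qed

lemma abs_diff_unit_step:
  fixes s x p :: int
  assumes "s \<in> {1, -1}"
  shows "\<bar>x - (p - s)\<bar> = \<bar>x - p\<bar> + (if 0 \<le> s * (x - p) then 1 else -1)"
  using assms by auto

lemma gdist_neighbours_eq:
  assumes "sx \<in> {1, -1}" and "sy \<in> {1, -1}"
    and "(0 \<le> sx * (x - p) \<and> 0 \<le> sy * (y - q)) \<or> (sx * (x - p) < 0 \<and> sy * (y - q) < 0)"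
  shows "gdist (x, y) (p - sx, q) = gdist (x, y) (p, q - sy)"
  using assms(3) abs_diff_unit_step[OF assms(1), of x p] abs_diff_unit_step[OF assms(2), of y q]
  by (auto simp: gdist_def)

lemma neighbours_not_resolved:
  assumes "sx \<in> {1, -1}" and "sy \<in> {1, -1}"
    and "w \<in> {(p, q)} \<union> quadrant (p, q) sx sy \<union> quadrant (p, q) (-sx) (-sy) \<union> qboundary (p, q) sx sy"
  shows "\<not> resolves w (p - sx, q) (p, q - sy)"
proof -
  obtain x y where w: "w = (x, y)" by fastforce
  have "(0 \<le> sx * (x - p) \<and> 0 \<le> sy * (y - q)) \<or> (sx * (x - p) < 0 \<and> sy * (y - q) < 0)"
    using assms(3) unfolding w quadrant_def qboundary_def by auto
  then show ?thesis
    using gdist_neighbours_eq[OF assms(1,2)] by (simp add: resolves_def w)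
qed

theorem lemma4:
  fixes n m :: nat and p q sx sy :: int and A B C :: "vertex set"
  assumes "n \<ge> 3" and "m \<ge> 3"
    and "interior n m (p, q)"
    and "sx \<in> {1, -1}" and "sy \<in> {1, -1}"
    and "finite A" and "A \<subseteq> grid_V n m" and "A \<subseteq> quadrant (p, q) sx sy"
    and "finite B" and "B \<subseteq> grid_V n m" and "B \<subseteq> quadrant (p, q) (-sx) (-sy)"
    and "finite C" and "C \<subseteq> grid_V n m"
    and "C \<subseteq> qboundary (p, q) sx sy \<or> C \<subseteq> qboundary (p, q) (-sx) (-sy)"
  shows "\<exists>ps qs. grid_adj n m (p, q) (ps, q) \<and> grid_adj n m (p, q) (p, qs) \<and>
           (\<forall>w \<in> {(p, q)} \<union> A \<union> B \<union> C. \<not> resolves w (ps, q) (p, qs))"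
proof -
  obtain tx ty where t: "tx \<in> {1, -1}" "ty \<in> {1, -1}"
    and witnesses: "{(p, q)} \<union> A \<union> B \<union> C \<subseteq>
      {(p, q)} \<union> quadrant (p, q) tx ty \<union> quadrant (p, q) (-tx) (-ty) \<union> qboundary (p, q) tx ty"
  proof (cases "C \<subseteq> qboundary (p, q) sx sy")
    case True
    then show ?thesis using that[OF assms(4,5)] assms(8,11) by blast
  next
    case False
    then have "C \<subseteq> qboundary (p, q) (-sx) (-sy)" using assms(14) by blast
    moreover have "-sx \<in> {1, -1}" "-sy \<in> {1, -1}"
      using assms(4,5) by auto
    ultimately show ?thesis
      using that[of "-sx" "-sy"] assms(8,11) unfolding minus_minus by blast
  qed
  have "grid_adj n m (p, q) (p - tx, q)" "grid_adj n m (p, q) (p, q - ty)"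
    using t interior_grid_adj[OF assms(3)] by auto
  moreover have "\<forall>w \<in> {(p, q)} \<union> A \<union> B \<union> C. \<not> resolves w (p - tx, q) (p, q - ty)"
    using neighbours_not_resolved[OF t] witnesses by blast
  ultimately show ?thesis by blast
qed

end
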